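(* Let $f=f(x_1,\ldots,x_n)$ be a positive Boolean function with exactly $k\ge 0$ relevant variables. Then the number $r(f)$ of extremal points of $f$ satisfies $r(f)\ge k+1$. Moreover, $r(f)=k+1$ if and only if $f$ is linear read-once.
   Context: Let $B=\{0,1\}$. For $\mathbf{x},\mathbf{y}\in B^n$, write $\mathbf{x}\preceq\mathbf{y}$ if $(\mathbf{x})_i=1$ implies $(\mathbf{y})_i=1$ for all $i$. A Boolean function $f$ on $B^n$ is positive if $f(\mathbf{x})=1$ and $\mathbf{x}\preceq\mathbf{y}$ imply $f(\mathbf{y})=1$. A maximal zero of $f$ is a $\preceq$-maximal point of $f^{-1}(0)$; a minimal one is a $\preceq$-minimal point of $f^{-1}(1)$; extremal points are the maximal zeros and minimal ones, and $r(f)$ denotes their number. A variable $x_k$ is relevant for $f$ if the functions $f_{|x_k=0}$ and $f_{|x_k=1}$ (obtained by fixing $x_k$) are not identical. A function is linear read-once (lro) if it is constant or can be represented by a nested formula, defined recursively: the literals $x$ and $\overline{x}$ are nested formulas; and $x\vee t$, $x\wedge t$, $\overline{x}\vee t$, $\overline{x}\wedge t$ are nested formulas whenever $x$ is a variable and $t$ is a nested formula containing neither $x$ nor $\overline{x}$. *)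

theory Defs
  imports Main
begin

text \<open>Points of B^n are represented as functions nat => bool that are False
  outside the index range {0..<n} (so x i is the i-th coordinate, i < n).\<close>

definition cube :: "nat \<Rightarrow> (nat \<Rightarrow> bool) set" where
  "cube n = {x. \<forall>i. n \<le> i \<longrightarrow> \<not> x i}"

definition vle :: "(nat \<Rightarrow> bool) \<Rightarrow> (nat \<Rightarrow> bool) \<Rightarrow> bool" where
  "vle x y \<longleftrightarrow> (\<forall>i. x i \<longrightarrow> y i)"

definition positive :: "nat \<Rightarrow> ((nat \<Rightarrow> bool) \<Rightarrow> bool) \<Rightarrow> bool" where
  "positive n f \<longleftrightarrow> (\<forall>x\<in>cube n. \<forall>y\<in>cube n. f x \<and> vle x y \<longrightarrow> f y)"

definition max_zeros :: "nat \<Rightarrow> ((nat \<Rightarrow> bool) \<Rightarrow> bool) \<Rightarrow> (nat \<Rightarrow> bool) set" where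
  "max_zeros n f = {x\<in>cube n. \<not> f x \<and> (\<forall>y\<in>cube n. \<not> f y \<and> vle x y \<longrightarrow> y = x)}"

definition min_ones :: "nat \<Rightarrow> ((nat \<Rightarrow> bool) \<Rightarrow> bool) \<Rightarrow> (nat \<Rightarrow> bool) set" where
  "min_ones n f = {x\<in>cube n. f x \<and> (\<forall>y\<in>cube n. f y \<and> vle y x \<longrightarrow> y = x)}"

definition extremal_points :: "nat \<Rightarrow> ((nat \<Rightarrow> bool) \<Rightarrow> bool) \<Rightarrow> (nat \<Rightarrow> bool) set" where
  "extremal_points n f = max_zeros n f \<union> min_ones n f"

definition r :: "nat \<Rightarrow> ((nat \<Rightarrow> bool) \<Rightarrow> bool) \<Rightarrow> nat" where
  "r n f = card (extremal_points n f)"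

definition relevant :: "nat \<Rightarrow> ((nat \<Rightarrow> bool) \<Rightarrow> bool) \<Rightarrow> nat \<Rightarrow> bool" where
  "relevant n f k \<longleftrightarrow> k < n \<and> (\<exists>x\<in>cube n. f (x(k := False)) \<noteq> f (x(k := True)))"

definition relevant_vars :: "nat \<Rightarrow> ((nat \<Rightarrow> bool) \<Rightarrow> bool) \<Rightarrow> nat set" where
  "relevant_vars n f = {k. relevant n f k}"

datatype nformula =
    NLit nat bool
  | NOr nat bool nformula
  | NAnd nat bool nformula

fun nvars :: "nformula \<Rightarrow> nat set" where
  "nvars (NLit v p) = {v}"
| "nvars (NOr v p t) = insert v (nvars t)"
| "nvars (NAnd v p t) = insert v (nvars t)"

fun nested_ok :: "nformula \<Rightarrow> bool" where
  "nested_ok (NLit v p) = True"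
| "nested_ok (NOr v p t) = (v \<notin> nvars t \<and> nested_ok t)"
| "nested_ok (NAnd v p t) = (v \<notin> nvars t \<and> nested_ok t)"

fun lit_val :: "(nat \<Rightarrow> bool) \<Rightarrow> nat \<Rightarrow> bool \<Rightarrow> bool" where
  "lit_val x v p = (if p then x v else \<not> x v)"

fun neval :: "nformula \<Rightarrow> (nat \<Rightarrow> bool) \<Rightarrow> bool" where
  "neval (NLit v p) x = lit_val x v p"
| "neval (NOr v p t) x = (lit_val x v p \<or> neval t x)"
| "neval (NAnd v p t) x = (lit_val x v p \<and> neval t x)"

definition lro :: "nat \<Rightarrow> ((nat \<Rightarrow> bool) \<Rightarrow> bool) \<Rightarrow> bool" where
  "lro n f \<longleftrightarrow>
     (\<exists>c. \<forall>x\<in>cube n. f x = c) \<or>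
     (\<exists>\<phi>. nested_ok \<phi> \<and> nvars \<phi> \<subseteq> {..<n} \<and> (\<forall>x\<in>cube n. f x = neval \<phi> x))"

end

theory Submission
  imports Defs
begin

text \<open>Write A for the minimal ones and B for the maximal zeros of f, so that r f = |A| + |B|.
  Fixing a relevant variable x to 1 strictly decreases r: every minimal one of the restriction
  lifts injectively to a minimal one of f, every maximal zero of the restriction is one of f, and
  B contains a further point with x = 0. The duality f \<mapsto> \<not> f (\<not> _), which exchanges A and B,
  handles x := 0. Choosing x in as few minimal ones as possible, one of the two restrictions keeps
  every other variable relevant, and induction on k gives r f \<ge> k + 1.

  If r f = k + 1, both comparisons are bijective, and from this one extracts a canalizing variable
  w: either f = x_w \<or> f|x_w=0 or f = x_w \<and> f|x_w=1, with a restriction that is again extremal, so f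
  unfolds into a nested formula. Conversely, removing the outermost variable of a nested formula
  costs one relevant variable and at most one extremal point.\<close>

section \<open>Extremal points on the cube\<close>

lemma vle_iff_le: "vle x y \<longleftrightarrow> x \<le> y"
  by (auto simp: vle_def le_fun_def)

lemma finite_cube: "finite (cube n)"
proof (rule finite_subset)
  show "cube n \<subseteq> (\<lambda>S i. i \<in> S) ` Pow {..<n}"
  proof
    fix a assume "a \<in> cube n"
    then have "a = (\<lambda>i. i \<in> {i. a i})" "{i. a i} \<in> Pow {..<n}"
      by (auto simp: cube_def not_le[symmetric])
    then show "a \<in> (\<lambda>S i. i \<in> S) ` Pow {..<n}" by (rule image_eqI)
  qed
qed simp

lemma cube_fun_upd [simp]: "x < n \<Longrightarrow> a \<in> cube n \<Longrightarrow> a(x := c) \<in> cube n"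
  by (auto simp: cube_def)

lemma cube_less: "a \<in> cube n \<Longrightarrow> a i \<Longrightarrow> i < n"
  by (auto simp: cube_def not_le[symmetric])

lemma bot_in_cube [simp]: "(\<lambda>_. False) \<in> cube n"
  by (simp add: cube_def)

lemma positiveD: "positive n f \<Longrightarrow> a \<in> cube n \<Longrightarrow> b \<in> cube n \<Longrightarrow> a \<le> b \<Longrightarrow> f a \<Longrightarrow> f b"
  unfolding positive_def vle_iff_le by blast

lemma min_ones_iff:
  "m \<in> min_ones n f \<longleftrightarrow> m \<in> cube n \<and> f m \<and> (\<forall>y\<in>cube n. f y \<and> y \<le> m \<longrightarrow> y = m)"
  by (auto simp: min_ones_def vle_iff_le)

lemma max_zeros_iff:
  "m \<in> max_zeros n f \<longleftrightarrow> m \<in> cube n \<and> \<not> f m \<and> (\<forall>y\<in>cube n. \<not> f y \<and> m \<le> y \<longrightarrow> y = m)"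
  by (auto simp: max_zeros_def vle_iff_le)

lemma min_one_below:
  assumes "a \<in> cube n" "f a"
  obtains m where "m \<in> min_ones n f" "m \<le> a"
proof -
  have "finite {c \<in> cube n. f c}" using finite_cube by simp
  from finite_has_minimal2[OF this, of a] assms that show ?thesis
    unfolding min_ones_iff by (metis (mono_tags, lifting) mem_Collect_eq)
qed

lemma max_zero_above:
  assumes "a \<in> cube n" "\<not> f a"
  obtains m where "m \<in> max_zeros n f" "a \<le> m"
proof -
  have "finite {c \<in> cube n. \<not> f c}" using finite_cube by simp
  from finite_has_maximal2[OF this, of a] assms that show ?thesis
    unfolding max_zeros_iff by (metis (mono_tags, lifting) mem_Collect_eq)
qed

lemma min_one_drop:
  assumes "m \<in> min_ones n f" "m z"
  shows "\<not> f (m(z := False))"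
proof
  assume "f (m(z := False))"
  moreover have "m(z := False) \<in> cube n" "m(z := False) \<le> m"
    using assms by (auto simp: min_ones_iff cube_def le_fun_def)
  ultimately have "m(z := False) = m" using assms(1) unfolding min_ones_iff by blast
  with assms(2) show False by (metis fun_upd_same)
qed

lemma max_zero_add:
  assumes "b \<in> max_zeros n f" "\<not> b z" "z < n"
  shows "f (b(z := True))"
proof (rule ccontr)
  assume "\<not> f (b(z := True))"
  moreover have "b(z := True) \<in> cube n" "b \<le> b(z := True)"
    using assms by (auto simp: max_zeros_iff le_fun_def)
  ultimately have "b(z := True) = b" using assms(1) unfolding max_zeros_iff by blast
  with assms(2) show False by (metis fun_upd_same)
qed

lemma finite_min_ones: "finite (min_ones n f)"
  and finite_max_zeros: "finite (max_zeros n f)"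
  by (rule finite_subset[OF _ finite_cube], auto simp: min_ones_def max_zeros_def)+

lemma r_eq_card: "r n f = card (min_ones n f) + card (max_zeros n f)"
proof -
  have "max_zeros n f \<inter> min_ones n f = {}" by (auto simp: min_ones_def max_zeros_def)
  then show ?thesis
    by (simp add: r_def extremal_points_def card_Un_disjoint[OF finite_max_zeros finite_min_ones])
qed

lemma in_relevant_vars_iff [simp]: "k \<in> relevant_vars n f \<longleftrightarrow> relevant n f k"
  by (simp add: relevant_vars_def)

lemma finite_relevant_vars: "finite (relevant_vars n f)"
  by (rule finite_subset[of _ "{..<n}"]) (auto simp: relevant_def)

lemma relevantI: "a \<in> cube n \<Longrightarrow> y < n \<Longrightarrow> f (a(y := False)) \<noteq> f (a(y := True)) \<Longrightarrow> relevant n f y"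
  by (auto simp: relevant_def)

lemma relevant_less: "relevant n f y \<Longrightarrow> y < n"
  by (simp add: relevant_def)

lemma positive_relevantE:
  assumes "positive n f" "relevant n f y"
  obtains a where "a \<in> cube n" "\<not> f (a(y := False))" "f (a(y := True))"
proof -
  obtain a where a: "a \<in> cube n" "f (a(y := False)) \<noteq> f (a(y := True))"
    using assms(2) by (auto simp: relevant_def)
  have "a(y := False) \<le> a(y := True)" by (simp add: le_fun_def)
  then show ?thesis
    using that a positiveD[OF assms(1)] relevant_less[OF assms(2)] by (metis cube_fun_upd)
qed

lemma relevant_in_min_one:
  assumes p: "positive n f" and z: "relevant n f z"
  obtains m where "m \<in> min_ones n f" "m z"
proof -
  obtain a where a: "a \<in> cube n" "\<not> f (a(z := False))" "f (a(z := True))"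
    using positive_relevantE[OF p z] .
  have zn: "z < n" using relevant_less[OF z] .
  obtain m where m: "m \<in> min_ones n f" "m \<le> a(z := True)"
    using min_one_below[of "a(z := True)" n f] a zn by auto
  have "m z"
  proof (rule ccontr)
    assume "\<not> m z"
    then have "m \<le> a(z := False)" using m(2) by (auto simp: le_fun_def)
    then show False using positiveD[OF p, of m "a(z := False)"] m(1) a zn by (auto simp: min_ones_iff)
  qed
  with m(1) that show ?thesis by blast
qed

lemma constant_if_no_relevant:
  assumes "relevant_vars n f = {}" "a \<in> cube n"
  shows "f a = f (\<lambda>_. False)"
proof -
  have below: "f a = f (\<lambda>_. False)" if "a \<in> cube n" "\<forall>i\<ge>m. \<not> a i" for a m
    using that
  proof (induction m arbitrary: a)
    case 0
    then have "a = (\<lambda>_. False)" by auto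
    then show ?case by simp
  next
    case (Suc m)
    have "f a = f (a(m := False))"
    proof (cases "m < n")
      case True
      have "\<not> relevant n f m" using assms(1) by (metis empty_iff in_relevant_vars_iff)
      then have "f (a(m := False)) = f (a(m := True))"
        using relevantI[OF Suc.prems(1) True, of f] by blast
      then show ?thesis by (cases "a m") (simp_all add: fun_upd_idem)
    next
      case False
      then have "a(m := False) = a" using Suc.prems(1) cube_less[of a n m] by (auto simp: fun_eq_iff)
      then show ?thesis by simp
    qed
    also have "\<dots> = f (\<lambda>_. False)"
      using Suc.prems by (intro Suc.IH) (auto simp: cube_def)
    finally show ?case .
  qed
  show ?thesis using below[OF assms(2), of n] assms(2) unfolding cube_def by blast
qed

lemma r_le_one_if_constant:
  assumes "\<forall>a\<in>cube n. f a = c"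
  shows "r n f \<le> 1"
proof (cases c)
  case True
  have "min_ones n f \<subseteq> {\<lambda>_. False}"
    using assms True by (auto simp: min_ones_iff le_fun_def dest!: bspec[of _ _ "\<lambda>_. False"])
  moreover have "max_zeros n f = {}" using assms True by (auto simp: max_zeros_iff)
  ultimately show ?thesis using card_mono[of "{\<lambda>_. False}" "min_ones n f"] by (simp add: r_eq_card)
next
  case False
  have top: "(\<lambda>i. i < n) \<in> cube n" by (simp add: cube_def)
  have "max_zeros n f \<subseteq> {\<lambda>i. i < n}"
  proof
    fix m assume m: "m \<in> max_zeros n f"
    then have "m \<le> (\<lambda>i. i < n)" by (auto simp: max_zeros_iff le_fun_def cube_less)
    then show "m \<in> {\<lambda>i. i < n}" using m top assms False by (auto simp: max_zeros_iff)
  qed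
  moreover have "min_ones n f = {}" using assms False by (auto simp: min_ones_iff)
  ultimately show ?thesis using card_mono[of "{\<lambda>i. i < n}" "max_zeros n f"] by (simp add: r_eq_card)
qed

section \<open>Fixing a variable\<close>

definition fix_var :: "((nat \<Rightarrow> bool) \<Rightarrow> bool) \<Rightarrow> nat \<Rightarrow> bool \<Rightarrow> (nat \<Rightarrow> bool) \<Rightarrow> bool" where
  "fix_var f x c = (\<lambda>a. f (a(x := c)))"

lemma positive_fix_var:
  assumes "positive n f" "x < n"
  shows "positive n (fix_var f x c)"
  unfolding positive_def vle_iff_le fix_var_def
proof (intro ballI impI)
  fix a b assume "a \<in> cube n" "b \<in> cube n" "f (a(x := c)) \<and> a \<le> b"
  then show "f (b(x := c))"
    using positiveD[OF assms(1), of "a(x := c)" "b(x := c)"] assms(2) by (auto simp: le_fun_def)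
qed

lemma relevant_vars_fix_var:
  assumes "x < n"
  shows "relevant_vars n (fix_var f x c) \<subseteq> relevant_vars n f - {x}"
proof
  fix y assume "y \<in> relevant_vars n (fix_var f x c)"
  then obtain a where a: "y < n" "a \<in> cube n" "f (a(y := False, x := c)) \<noteq> f (a(y := True, x := c))"
    by (auto simp: relevant_def fix_var_def)
  then have "y \<noteq> x" by auto
  with a assms have "relevant n f y"
    by (intro relevantI[of "a(x := c)"]) (simp_all add: fun_upd_twist)
  with \<open>y \<noteq> x\<close> show "y \<in> relevant_vars n f - {x}" by simp
qed

lemma min_one_fix_var_not:
  assumes "m \<in> min_ones n (fix_var f x c)"
  shows "\<not> m x"
  using min_one_drop[OF assms, of x] assms by (auto simp: min_ones_iff fix_var_def)

lemma max_zero_fix_var: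
  assumes "x < n" "m \<in> max_zeros n (fix_var f x c)"
  shows "m x"
  using max_zero_add[OF assms(2), of x] assms by (auto simp: max_zeros_iff fix_var_def)

text \<open>Input x_w = c forces output c, i.e. f = x_w \<or> f|x_w=0 for c = True and f = x_w \<and> f|x_w=1
  for c = False. For positive f no other kind of canalization occurs.\<close>
definition canalizing :: "nat \<Rightarrow> ((nat \<Rightarrow> bool) \<Rightarrow> bool) \<Rightarrow> nat \<Rightarrow> bool \<Rightarrow> bool" where
  "canalizing n f w c \<longleftrightarrow> (\<forall>a\<in>cube n. a w = c \<longrightarrow> f a = c)"

lemma relevant_vars_fix_var_canalizing:
  assumes can: "canalizing n f v c" and v: "v < n"
  shows "relevant_vars n (fix_var f v (\<not> c)) = relevant_vars n f - {v}"
proof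
  show "relevant_vars n f - {v} \<subseteq> relevant_vars n (fix_var f v (\<not> c))"
  proof
    fix y assume "y \<in> relevant_vars n f - {v}"
    then obtain a where a: "y < n" "a \<in> cube n" "f (a(y := False)) \<noteq> f (a(y := True))" "y \<noteq> v"
      by (auto simp: relevant_def)
    have "a v = (\<not> c)"
      using can a unfolding canalizing_def by (metis cube_fun_upd fun_upd_other)
    then have "a(y := b, v := \<not> c) = a(y := b)" for b using a(4) by (auto simp: fun_eq_iff)
    then show "y \<in> relevant_vars n (fix_var f v (\<not> c))"
      using a by (auto simp: fix_var_def intro!: relevantI)
  qed
qed (rule relevant_vars_fix_var[OF v])

lemma card_relevant_vars_remove:
  assumes "x \<in> relevant_vars n f" "relevant_vars n g = relevant_vars n f - {x}"
  shows "card (relevant_vars n f) = card (relevant_vars n g) + 1"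
proof -
  have "card (relevant_vars n f) > 0"
    using assms(1) finite_relevant_vars[of n f] by (auto simp: card_gt_0_iff)
  with assms show ?thesis by (simp add: card_Diff_singleton)
qed

section \<open>Duality\<close>

definition cube_compl :: "nat \<Rightarrow> (nat \<Rightarrow> bool) \<Rightarrow> nat \<Rightarrow> bool" where
  "cube_compl n a = (\<lambda>i. i < n \<and> \<not> a i)"

definition dual :: "nat \<Rightarrow> ((nat \<Rightarrow> bool) \<Rightarrow> bool) \<Rightarrow> (nat \<Rightarrow> bool) \<Rightarrow> bool" where
  "dual n f = (\<lambda>a. \<not> f (cube_compl n a))"

lemma cube_compl_in_cube [simp]: "cube_compl n a \<in> cube n"
  by (auto simp: cube_compl_def cube_def)

lemma cube_compl_cube_compl [simp]: "a \<in> cube n \<Longrightarrow> cube_compl n (cube_compl n a) = a"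
  by (auto simp: cube_compl_def fun_eq_iff cube_less)

lemma cube_compl_le_iff:
  "a \<in> cube n \<Longrightarrow> b \<in> cube n \<Longrightarrow> cube_compl n a \<le> cube_compl n b \<longleftrightarrow> b \<le> a"
  by (fastforce simp: cube_compl_def le_fun_def dest: cube_less)

lemma cube_compl_eq_iff:
  "a \<in> cube n \<Longrightarrow> b \<in> cube n \<Longrightarrow> cube_compl n a = cube_compl n b \<longleftrightarrow> a = b"
  by (metis cube_compl_cube_compl)

lemma cube_compl_apply: "cube_compl n a i \<longleftrightarrow> i < n \<and> \<not> a i"
  by (simp add: cube_compl_def)

lemma cube_compl_fun_upd: "x < n \<Longrightarrow> cube_compl n (a(x := c)) = (cube_compl n a)(x := \<not> c)"
  by (auto simp: cube_compl_def fun_eq_iff)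

lemma image_cube_compl:
  assumes "S \<subseteq> cube n"
  shows "cube_compl n ` S = {m \<in> cube n. cube_compl n m \<in> S}"
proof
  show "cube_compl n ` S \<subseteq> {m \<in> cube n. cube_compl n m \<in> S}"
    using assms by auto
  show "{m \<in> cube n. cube_compl n m \<in> S} \<subseteq> cube_compl n ` S"
  proof
    fix m assume "m \<in> {m \<in> cube n. cube_compl n m \<in> S}"
    then show "m \<in> cube_compl n ` S" by (metis (mono_tags) cube_compl_cube_compl image_eqI mem_Collect_eq)
  qed
qed

lemma ball_cube_compl: "(\<forall>a\<in>cube n. P (cube_compl n a)) \<longleftrightarrow> (\<forall>a\<in>cube n. P a)"
proof -
  have "cube_compl n ` cube n = cube n" by (simp add: image_cube_compl)
  moreover have "(\<forall>a\<in>cube_compl n ` cube n. P a) \<longleftrightarrow> (\<forall>a\<in>cube n. P (cube_compl n a))" by simp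
  ultimately show ?thesis by simp
qed

lemma positive_dual: "positive n f \<Longrightarrow> positive n (dual n f)"
  unfolding positive_def dual_def vle_iff_le by (metis cube_compl_in_cube cube_compl_le_iff)

lemma min_ones_dual: "min_ones n (dual n f) = cube_compl n ` max_zeros n f"
proof -
  have "m \<in> min_ones n (dual n f) \<longleftrightarrow> cube_compl n m \<in> max_zeros n f" if m: "m \<in> cube n" for m
    unfolding min_ones_iff max_zeros_iff dual_def
    using m ball_cube_compl[of n "\<lambda>y. \<not> f y \<and> cube_compl n m \<le> y \<longrightarrow> y = cube_compl n m"]
    by (auto simp: cube_compl_le_iff cube_compl_eq_iff)
  then show ?thesis
    by (subst image_cube_compl) (auto simp: max_zeros_def min_ones_def)
qed

lemma max_zeros_dual: "max_zeros n (dual n f) = cube_compl n ` min_ones n f"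
proof -
  have "m \<in> max_zeros n (dual n f) \<longleftrightarrow> cube_compl n m \<in> min_ones n f" if m: "m \<in> cube n" for m
    unfolding min_ones_iff max_zeros_iff dual_def
    using m ball_cube_compl[of n "\<lambda>y. f y \<and> y \<le> cube_compl n m \<longrightarrow> y = cube_compl n m"]
    by (auto simp: cube_compl_le_iff cube_compl_eq_iff)
  then show ?thesis
    by (subst image_cube_compl) (auto simp: max_zeros_def min_ones_def)
qed

lemma r_dual: "r n (dual n f) = r n f"
proof -
  have "inj_on (cube_compl n) (cube n)" by (rule inj_onI) (simp add: cube_compl_eq_iff)
  then have "inj_on (cube_compl n) (max_zeros n f)" "inj_on (cube_compl n) (min_ones n f)"
    by (auto intro: inj_on_subset simp: max_zeros_def min_ones_def)
  then show ?thesis by (simp add: r_eq_card min_ones_dual max_zeros_dual card_image)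
qed

lemma relevant_dual: "relevant n (dual n f) y \<longleftrightarrow> relevant n f y"
proof -
  have "(\<exists>a\<in>cube n. dual n f (a(y := False)) \<noteq> dual n f (a(y := True)))
    \<longleftrightarrow> (\<exists>a\<in>cube n. f (a(y := False)) \<noteq> f (a(y := True)))" if "y < n"
    using that ball_cube_compl[of n "\<lambda>a. f (a(y := False)) = f (a(y := True))"]
    by (auto simp: dual_def cube_compl_fun_upd)
  then show ?thesis by (auto simp: relevant_def)
qed

lemma relevant_vars_dual: "relevant_vars n (dual n f) = relevant_vars n f"
  by (simp add: relevant_vars_def relevant_dual)

lemma fix_var_dual: "x < n \<Longrightarrow> fix_var (dual n f) x c = dual n (fix_var f x (\<not> c))"
  by (simp add: fix_var_def dual_def cube_compl_fun_upd fun_eq_iff)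

lemma canalizing_dual:
  assumes "w < n"
  shows "canalizing n (dual n f) w c \<longleftrightarrow> canalizing n f w (\<not> c)"
proof -
  have "canalizing n (dual n f) w c \<longleftrightarrow>
    (\<forall>a\<in>cube n. cube_compl n a w = c \<longrightarrow> dual n f (cube_compl n a) = c)"
    unfolding canalizing_def by (rule ball_cube_compl[symmetric])
  also have "\<dots> \<longleftrightarrow> canalizing n f w (\<not> c)"
    using assms by (auto simp: canalizing_def dual_def cube_compl_apply)
  finally show ?thesis .
qed

section \<open>The lower bound\<close>

lemma relevant_in_max_zero:
  assumes p: "positive n f" and x: "relevant n f x"
  obtains b where "b \<in> max_zeros n f" "\<not> b x"
proof -
  obtain m where m: "m \<in> min_ones n (dual n f)" "m x"
    using relevant_in_min_one[OF positive_dual[OF p]] x by (metis relevant_dual)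
  then obtain b where "b \<in> max_zeros n f" "m = cube_compl n b" by (auto simp: min_ones_dual)
  with m(2) that show ?thesis by (simp add: cube_compl_apply)
qed

lemma min_one_fix_var_True_lift:
  assumes p: "positive n f" and x: "x < n" and a: "a \<in> min_ones n (fix_var f x True)"
  shows "(if f a then a else a(x := True)) \<in> min_ones n f"
proof -
  have ac: "a \<in> cube n" and ax: "\<not> a x" and fa: "f (a(x := True))"
    using a min_one_fix_var_not[OF a] by (auto simp: min_ones_iff fix_var_def)
  have below: "c(x := False) = a" if c: "c \<in> cube n" "f c" "c(x := False) \<le> a" for c
  proof -
    have "f (c(x := True))" using positiveD[OF p c(1), of "c(x := True)"] c x by (simp add: le_fun_def)
    then show ?thesis using a c x by (auto simp: min_ones_iff fix_var_def)
  qed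
  show ?thesis
  proof (cases "f a")
    case True
    have "c = a" if c: "c \<in> cube n" "f c" "c \<le> a" for c
    proof -
      have "c(x := False) = c" using c(3) ax by (auto simp: le_fun_def fun_eq_iff)
      then show ?thesis using below[OF c(1,2)] c(3) by simp
    qed
    then have "a \<in> min_ones n f" using True ac unfolding min_ones_iff by blast
    with True show ?thesis by simp
  next
    case False
    have "c = a(x := True)" if c: "c \<in> cube n" "f c" "c \<le> a(x := True)" for c
    proof -
      have ca: "c(x := False) = a" using below[OF c(1,2)] c(3) by (auto simp: le_fun_def)
      show ?thesis
      proof (cases "c x")
        case True
        then have "c = (c(x := False))(x := True)" by (simp add: fun_eq_iff)
        with ca show ?thesis by simp
      next
        case False
        then have "c(x := False) = c" by (simp add: fun_upd_idem)
        with ca have "c = a" by simp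
        with \<open>\<not> f a\<close> c(2) show ?thesis by simp
      qed
    qed
    moreover have "a(x := True) \<in> cube n" using ac x by simp
    ultimately have "a(x := True) \<in> min_ones n f" using fa unfolding min_ones_iff by blast
    with False show ?thesis by simp
  qed
qed

lemma inj_on_fix_var_True_lift:
  "inj_on (\<lambda>a. if f a then a else a(x := True)) (min_ones n (fix_var f x True))"
proof (rule inj_onI)
  fix a b assume a: "a \<in> min_ones n (fix_var f x True)" and b: "b \<in> min_ones n (fix_var f x True)"
    and eq: "(if f a then a else a(x := True)) = (if f b then b else b(x := True))"
  have "(if f c then c else c(x := True))(x := False) = c" if "c \<in> min_ones n (fix_var f x True)" for c
    using min_one_fix_var_not[OF that] by (simp add: fun_upd_idem)
  from this[OF a] this[OF b] eq show "a = b" by metis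
qed

lemma max_zeros_fix_var_True_subset:
  assumes "x < n"
  shows "max_zeros n (fix_var f x True) \<subseteq> max_zeros n f"
proof
  fix b assume b: "b \<in> max_zeros n (fix_var f x True)"
  have bx: "b x" using max_zero_fix_var[OF assms b] .
  have bmax: "\<forall>y\<in>cube n. \<not> f (y(x := True)) \<and> b \<le> y \<longrightarrow> y = b"
    using b by (simp add: max_zeros_iff fix_var_def)
  have "y = b" if y: "y \<in> cube n" "\<not> f y" "b \<le> y" for y
  proof -
    have "y(x := True) = y" using bx y(3) by (auto simp: le_fun_def fun_eq_iff)
    with y bmax show ?thesis by metis
  qed
  moreover have "b(x := True) = b" using bx by (simp add: fun_upd_idem)
  ultimately show "b \<in> max_zeros n f" using b unfolding max_zeros_iff fix_var_def by metis
qed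

lemma fix_var_True_extremal_points:
  assumes p: "positive n f" and x: "x < n" and b: "b \<in> max_zeros n f" "\<not> b x"
  defines "lift \<equiv> \<lambda>a. if f a then a else a(x := True)"
  shows "lift ` min_ones n (fix_var f x True) \<subseteq> min_ones n f"
    and "card (lift ` min_ones n (fix_var f x True)) = card (min_ones n (fix_var f x True))"
    and "insert b (max_zeros n (fix_var f x True)) \<subseteq> max_zeros n f"
    and "card (insert b (max_zeros n (fix_var f x True))) = card (max_zeros n (fix_var f x True)) + 1"
proof -
  show "lift ` min_ones n (fix_var f x True) \<subseteq> min_ones n f"
    unfolding lift_def by (rule image_subsetI) (rule min_one_fix_var_True_lift[OF p x])
  show "card (lift ` min_ones n (fix_var f x True)) = card (min_ones n (fix_var f x True))"
    unfolding lift_def by (rule card_image[OF inj_on_fix_var_True_lift])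
  show "insert b (max_zeros n (fix_var f x True)) \<subseteq> max_zeros n f"
    using b(1) max_zeros_fix_var_True_subset[OF x] by blast
  have "b \<notin> max_zeros n (fix_var f x True)" using max_zero_fix_var[OF x] b(2) by blast
  then show "card (insert b (max_zeros n (fix_var f x True))) = card (max_zeros n (fix_var f x True)) + 1"
    by (simp add: finite_max_zeros)
qed

lemma r_fix_var_True_less:
  assumes p: "positive n f" and x: "relevant n f x"
  shows "r n (fix_var f x True) < r n f"
proof -
  have xn: "x < n" using relevant_less[OF x] .
  obtain b where b: "b \<in> max_zeros n f" "\<not> b x" using relevant_in_max_zero[OF p x] .
  note ext = fix_var_True_extremal_points[OF p xn b]
  have "card (min_ones n (fix_var f x True)) \<le> card (min_ones n f)"
    using card_mono[OF finite_min_ones ext(1)] ext(2) by simp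
  moreover have "card (max_zeros n (fix_var f x True)) + 1 \<le> card (max_zeros n f)"
    using card_mono[OF finite_max_zeros ext(3)] ext(4) by simp
  ultimately show ?thesis by (simp add: r_eq_card)
qed

lemma r_fix_var_less:
  assumes p: "positive n f" and x: "relevant n f x"
  shows "r n (fix_var f x c) < r n f"
proof (cases c)
  case True
  with r_fix_var_True_less[OF p x] show ?thesis by simp
next
  case False
  have "r n (fix_var (dual n f) x True) < r n (dual n f)"
    using r_fix_var_True_less[OF positive_dual[OF p]] x by (simp add: relevant_dual)
  with False relevant_less[OF x] show ?thesis by (simp add: fix_var_dual r_dual)
qed

lemma r_pos: "0 < r n f"
proof -
  have "min_ones n f \<noteq> {} \<or> max_zeros n f \<noteq> {}"
  proof (cases "f (\<lambda>_. False)")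
    case True
    then show ?thesis using min_one_below[OF bot_in_cube, of f n] by blast
  next
    case False
    then show ?thesis using max_zero_above[OF bot_in_cube, of f n] by blast
  qed
  then show ?thesis using finite_min_ones[of n f] finite_max_zeros[of n f]
    by (auto simp: r_eq_card card_gt_0_iff)
qed

lemma min_one_contains_fixed_var:
  assumes y: "y < n" "\<not> relevant n (fix_var f x False) y"
    and m: "m \<in> min_ones n f" "m y"
  shows "m x"
proof (rule ccontr)
  assume mx: "\<not> m x"
  have mc: "m \<in> cube n" using m(1) by (simp add: min_ones_iff)
  have "fix_var f x False (m(y := False)) = fix_var f x False (m(y := True))"
    using y relevantI[OF mc y(1), of "fix_var f x False"] by blast
  moreover have "m(y := True, x := False) = m" "m(y := False, x := False) = m(y := False)"
    using mx m(2) by (auto simp: fun_eq_iff)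
  ultimately have "f (m(y := False))" using m(1) by (simp add: fix_var_def min_ones_iff)
  with min_one_drop[OF m] show False by contradiction
qed

lemma relevant_fix_var_True_twin:
  assumes p: "positive n f" and z: "relevant n f z" "z \<noteq> x" and x: "x < n"
    and twin: "\<And>q. q \<in> min_ones n f \<Longrightarrow> q x \<longleftrightarrow> q y" and y: "y \<noteq> x"
  shows "relevant n (fix_var f x True) z"
proof -
  have zn: "z < n" using relevant_less[OF z(1)] .
  obtain m where m: "m \<in> min_ones n f" "m z" using relevant_in_min_one[OF p z(1)] .
  have mc: "m \<in> cube n" and fm: "f m" and mmin: "\<forall>c\<in>cube n. f c \<and> c \<le> m \<longrightarrow> c = m"
    using m(1) by (auto simp: min_ones_iff)
  note m_drop_z = min_one_drop[OF m]
  show ?thesis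
  proof (cases "m x")
    case True
    then have "m(z := False, x := True) = m(z := False)" "m(z := True, x := True) = m"
      using m(2) z(2) by (auto simp: fun_eq_iff)
    with m_drop_z fm show ?thesis by (intro relevantI[OF mc zn]) (simp add: fix_var_def)
  next
    case False
    have "\<not> f (m(z := False, x := True))"
    proof
      assume "f (m(z := False, x := True))"
      then obtain q where q: "q \<in> min_ones n f" "q \<le> m(z := False, x := True)"
        using min_one_below[of "m(z := False, x := True)" n f] mc zn x by auto
      show False
      proof (cases "q x")
        case True
        then have "q y" using twin[OF q(1)] by simp
        with q(2) y have "m y" by (auto simp: le_fun_def split: if_splits)
        with twin[OF m(1)] False show False by simp
      next
        case False
        with q(2) have "q \<le> m" "\<not> q z" by (auto simp: le_fun_def split: if_splits)
        with q(1) mmin m(2) show False by (metis min_ones_iff)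
      qed
    qed
    moreover have "f (m(x := True))" using positiveD[OF p mc, of "m(x := True)"] fm x mc by (simp add: le_fun_def)
    moreover have "m(z := True) = m" using m(2) by (simp add: fun_upd_idem)
    ultimately show ?thesis by (intro relevantI[OF mc zn]) (simp add: fix_var_def)
  qed
qed

text \<open>Choose x in as few minimal ones as possible. If fixing x := 0 makes some y irrelevant,
  then every minimal one through y passes through x, so by minimality x and y lie in the same
  minimal ones; then fixing x := 1 keeps every other variable relevant.\<close>
lemma fix_var_keeping_relevant_vars:
  assumes p: "positive n f" and ne: "relevant_vars n f \<noteq> {}"
  obtains x c where "relevant n f x" "relevant_vars n (fix_var f x c) = relevant_vars n f - {x}"
proof -
  define I where "I v = {m \<in> min_ones n f. m v}" for v
  obtain x0 where "relevant n f x0" using ne by auto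
  with ex_has_least_nat[of "relevant n f" x0 "\<lambda>v. card (I v)"] obtain x
    where x: "relevant n f x" and x_min: "\<And>y. relevant n f y \<Longrightarrow> card (I x) \<le> card (I y)"
    by blast
  have xn: "x < n" using relevant_less[OF x] .
  show ?thesis
  proof (cases "relevant_vars n f - {x} \<subseteq> relevant_vars n (fix_var f x False)")
    case True
    then show ?thesis using that[OF x, of False] relevant_vars_fix_var[OF xn, of f False] by blast
  next
    case False
    then obtain y where "y \<in> relevant_vars n f - {x}" "y \<notin> relevant_vars n (fix_var f x False)"
      by blast
    then have y: "relevant n f y" "y \<noteq> x" "\<not> relevant n (fix_var f x False) y" by simp_all
    have "I y \<subseteq> I x"
      using min_one_contains_fixed_var[OF relevant_less[OF y(1)] y(3)] by (auto simp: I_def)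
    moreover have "finite (I x)" using finite_min_ones[of n f] by (simp add: I_def)
    ultimately have "I y = I x" using x_min[OF y(1)] by (metis card_subset_eq card_mono le_antisym)
    then have twin: "\<And>q. q \<in> min_ones n f \<Longrightarrow> q x \<longleftrightarrow> q y" by (auto simp: I_def set_eq_iff)
    have "relevant n (fix_var f x True) z" if "relevant n f z" "z \<noteq> x" for z
      using relevant_fix_var_True_twin[OF p that xn twin y(2)] .
    then have "relevant_vars n f - {x} \<subseteq> relevant_vars n (fix_var f x True)"
      by (simp add: subset_iff)
    then show ?thesis using that[OF x, of True] relevant_vars_fix_var[OF xn, of f True] by blast
  qed
qed

theorem r_lower_bound:
  assumes "positive n f"
  shows "card (relevant_vars n f) + 1 \<le> r n f"
  using assms
proof (induction "card (relevant_vars n f)" arbitrary: f)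
  case 0
  then show ?case using r_pos[of n f] by simp
next
  case (Suc k)
  have "relevant_vars n f \<noteq> {}" using Suc.hyps(2) by auto
  then obtain x c where x: "relevant n f x"
    and rel: "relevant_vars n (fix_var f x c) = relevant_vars n f - {x}"
    using fix_var_keeping_relevant_vars[OF Suc.prems] by blast
  have k: "k = card (relevant_vars n (fix_var f x c))"
    using card_relevant_vars_remove[of x n f, OF _ rel] x Suc.hyps(2) by simp
  have "k + 1 \<le> r n (fix_var f x c)"
    using Suc.hyps(1)[OF k positive_fix_var[OF Suc.prems relevant_less[OF x]]] k by simp
  with r_fix_var_less[OF Suc.prems x, of c] Suc.hyps(2) show ?case by simp
qed

section \<open>A canalizing variable in the extremal case\<close>

lemma r_fix_var_tight:
  assumes p: "positive n f" and x: "relevant n f x"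
    and rel: "relevant_vars n (fix_var f x c) = relevant_vars n f - {x}"
    and tight: "r n f = card (relevant_vars n f) + 1"
  shows "r n (fix_var f x c) = card (relevant_vars n (fix_var f x c)) + 1"
    and "r n f = r n (fix_var f x c) + 1"
proof -
  have "card (relevant_vars n f) = card (relevant_vars n (fix_var f x c)) + 1"
    using card_relevant_vars_remove[of x n f, OF _ rel] x by simp
  moreover have "card (relevant_vars n (fix_var f x c)) + 1 \<le> r n (fix_var f x c)"
    using r_lower_bound[OF positive_fix_var[OF p relevant_less[OF x]]] .
  moreover have "r n (fix_var f x c) < r n f" using r_fix_var_less[OF p x] .
  ultimately show "r n (fix_var f x c) = card (relevant_vars n (fix_var f x c)) + 1"
    and "r n f = r n (fix_var f x c) + 1"
    using tight by simp_all
qed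

lemma extremal_points_tight_fix_var_True:
  assumes p: "positive n f" and x: "relevant n f x"
    and tight: "r n f = r n (fix_var f x True) + 1"
  obtains b where "b \<in> max_zeros n f"
    and "\<And>a. a \<in> cube n \<Longrightarrow> \<not> a x \<Longrightarrow> \<not> f a \<Longrightarrow> f (a(x := True)) \<Longrightarrow> a \<le> b"
    and "\<And>m. m \<in> min_ones n f \<Longrightarrow> \<not> m x \<Longrightarrow> m \<in> min_ones n (fix_var f x True)"
proof -
  let ?g = "fix_var f x True" and ?lift = "\<lambda>a. if f a then a else a(x := True)"
  have xn: "x < n" using relevant_less[OF x] .
  obtain b where b: "b \<in> max_zeros n f" "\<not> b x" using relevant_in_max_zero[OF p x] .
  note ext = fix_var_True_extremal_points[OF p xn b]
  have "card (min_ones n ?g) \<le> card (min_ones n f)"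
    using card_mono[OF finite_min_ones ext(1)] ext(2) by simp
  moreover have "card (max_zeros n ?g) + 1 \<le> card (max_zeros n f)"
    using card_mono[OF finite_max_zeros ext(3)] ext(4) by simp
  ultimately have "card (?lift ` min_ones n ?g) = card (min_ones n f)"
    and "card (insert b (max_zeros n ?g)) = card (max_zeros n f)"
    using tight ext(2,4) by (simp_all add: r_eq_card)
  then have min_ones_eq: "?lift ` min_ones n ?g = min_ones n f"
    and max_zeros_eq: "insert b (max_zeros n ?g) = max_zeros n f"
    using card_subset_eq[OF finite_min_ones ext(1)] card_subset_eq[OF finite_max_zeros ext(3)] by simp_all
  show ?thesis
  proof (rule that[OF b(1)])
    fix a assume a: "a \<in> cube n" "\<not> a x" "\<not> f a" "f (a(x := True))"
    obtain b' where b': "b' \<in> max_zeros n f" "a \<le> b'" using max_zero_above[of a n f, OF a(1,3)] .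
    have "b' \<notin> max_zeros n ?g"
    proof
      assume "b' \<in> max_zeros n ?g"
      then have "a(x := True) \<le> b'" using max_zero_fix_var[OF xn] b'(2) by (auto simp: le_fun_def)
      then show False using positiveD[OF p, of "a(x := True)" b'] a xn b'(1) by (auto simp: max_zeros_iff)
    qed
    with b'(1) max_zeros_eq have "b' = b" by blast
    with b'(2) show "a \<le> b" by simp
  next
    fix m assume m: "m \<in> min_ones n f" "\<not> m x"
    then obtain a where a: "a \<in> min_ones n ?g" "m = ?lift a" using min_ones_eq by blast
    with m(2) have "m = a" by (auto split: if_splits)
    with a(1) show "m \<in> min_ones n ?g" by simp
  qed
qed

definition canalizing_var :: "nat \<Rightarrow> ((nat \<Rightarrow> bool) \<Rightarrow> bool) \<Rightarrow> nat \<Rightarrow> bool" where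
  "canalizing_var n f w \<longleftrightarrow> relevant n f w \<and> (\<exists>c. canalizing n f w c)"

lemma canalizing_var_dual: "canalizing_var n (dual n f) w \<longleftrightarrow> canalizing_var n f w"
proof (cases "w < n")
  case True
  then have "(\<exists>c. canalizing n (dual n f) w c) \<longleftrightarrow> (\<exists>c. canalizing n f w c)"
    by (simp add: canalizing_dual[OF True] ex_bool_eq disj_commute)
  then show ?thesis by (simp add: canalizing_var_def relevant_dual)
next
  case False
  then show ?thesis by (simp add: canalizing_var_def relevant_def)
qed

definition atom :: "nat \<Rightarrow> nat \<Rightarrow> bool" where
  "atom w = (\<lambda>i. i = w)"

lemma atom_in_cube [simp]: "w < n \<Longrightarrow> atom w \<in> cube n"
  by (auto simp: atom_def cube_def)

lemma atom_le_iff [simp]: "atom w \<le> a \<longleftrightarrow> a w"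
  by (auto simp: atom_def le_fun_def)

lemma canalizing_True_iff_atom:
  assumes p: "positive n f" and w: "w < n"
  shows "canalizing n f w True \<longleftrightarrow> f (atom w)"
proof
  show "canalizing n f w True \<Longrightarrow> f (atom w)"
    using atom_in_cube[OF w] by (simp add: canalizing_def atom_def)
  show "f (atom w) \<Longrightarrow> canalizing n f w True"
    using positiveD[OF p atom_in_cube[OF w]] by (simp add: canalizing_def)
qed

lemma canalizing_False_if_fix_var_constant:
  assumes p: "positive n f" and x: "relevant n f x"
    and none: "relevant_vars n (fix_var f x False) = {}"
  shows "canalizing n f x False"
proof -
  obtain a where a: "a \<in> cube n" "\<not> f (a(x := False))"
    using positive_relevantE[OF p x] by blast
  have "\<not> f b" if b: "b \<in> cube n" "\<not> b x" for b
  proof -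
    have "fix_var f x False b = fix_var f x False a"
      using constant_if_no_relevant[OF none] b(1) a(1) by metis
    moreover have "b(x := False) = b" using b(2) by (simp add: fun_upd_idem)
    ultimately show ?thesis using a(2) by (simp add: fix_var_def)
  qed
  then show ?thesis by (auto simp: canalizing_def)
qed

lemma canalizing_var_of_atom:
  assumes p: "positive n f" and z: "z < n" "f (atom z)" and b: "b \<in> max_zeros n f" "\<not> b z"
  shows "canalizing_var n f z"
proof -
  have "f (b(z := False)) \<noteq> f (b(z := True))"
    using b max_zero_add[OF b z(1)] by (auto simp: max_zeros_iff fun_upd_idem)
  with b(1) z(1) have "relevant n f z" by (intro relevantI) (auto simp: max_zeros_iff)
  with canalizing_True_iff_atom[OF p z(1)] z(2) show ?thesis by (auto simp: canalizing_var_def)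
qed

lemma canalizing_False_of_fix_var_True:
  assumes p: "positive n f" and x: "x < n" and can: "canalizing n (fix_var f x True) w False"
  shows "canalizing n f w False"
proof -
  have "\<not> f a" if a: "a \<in> cube n" "\<not> a w" for a
  proof
    assume "f a"
    then have "f (a(x := True))" using positiveD[OF p a(1), of "a(x := True)"] x a(1)
      by (simp add: le_fun_def)
    with can a show False unfolding canalizing_def fix_var_def by blast
  qed
  then show ?thesis by (auto simp: canalizing_def)
qed

text \<open>The hard case of the tight restriction x := 1: in f|x=1 the input x_w = 1 forces 1, while in
  f neither x_w = 1 forces 1 nor x = 0 forces 0. A one a0 of f avoiding x leaves the new
  maximal zero b in some z, and the two-point set {w, z} then forces {z} to be a minimal one.\<close>
lemma canalizing_var_of_tight_atom:
  assumes p: "positive n f" and x: "x < n" and w: "w < n" "w \<noteq> x"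
    and b: "b \<in> max_zeros n f"
    and below_b: "\<And>a. a \<in> cube n \<Longrightarrow> \<not> a x \<Longrightarrow> \<not> f a \<Longrightarrow> f (a(x := True)) \<Longrightarrow> a \<le> b"
    and min_ones_g: "\<And>m. m \<in> min_ones n f \<Longrightarrow> \<not> m x \<Longrightarrow> m \<in> min_ones n (fix_var f x True)"
    and g_can: "canalizing n (fix_var f x True) w True"
    and f_w: "\<not> f (atom w)"
    and a0: "a0 \<in> cube n" "\<not> a0 x" "f a0"
  shows "\<exists>z. canalizing_var n f z"
proof -
  have bc: "b \<in> cube n" and fb: "\<not> f b" using b by (auto simp: max_zeros_iff)
  have g_w: "f (a(x := True))" if "a \<in> cube n" "a w" for a
    using g_can that unfolding canalizing_def fix_var_def by blast
  have "atom w \<le> b" using below_b[OF atom_in_cube[OF w(1)]] f_w g_w[OF atom_in_cube[OF w(1)]] w x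
    by (simp add: atom_def)
  then have bw: "b w" by simp
  have "\<not> a0 \<le> b" using positiveD[OF p a0(1) bc _ a0(3)] fb by blast
  then obtain z where z: "a0 z" "\<not> b z" by (auto simp: le_fun_def)
  have zn: "z < n" and zx: "z \<noteq> x" and zw: "z \<noteq> w"
    using cube_less[OF a0(1) z(1)] z a0(2) bw by auto
  define pz where "pz = (\<lambda>i. i = w \<or> i = z)"
  have pz: "pz \<in> cube n" using w zn by (auto simp: pz_def cube_def)
  have "f pz"
  proof (rule ccontr)
    assume "\<not> f pz"
    then have "pz \<le> b" using below_b[OF pz] g_w[OF pz] w(2) zx by (simp add: pz_def)
    with z(2) show False by (auto simp: pz_def le_fun_def)
  qed
  then obtain m where m: "m \<in> min_ones n f" "m \<le> pz" using min_one_below[OF pz] by blast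
  have mc: "m \<in> cube n" and fm: "f m" using m(1) by (auto simp: min_ones_iff)
  have mx: "\<not> m x" using m(2) w(2) zx by (auto simp: pz_def le_fun_def)
  have mz: "m z"
  proof (rule ccontr)
    assume "\<not> m z"
    then have "m \<le> atom w" using m(2) by (auto simp: pz_def atom_def le_fun_def)
    with positiveD[OF p mc atom_in_cube[OF w(1)] _ fm] f_w show False by blast
  qed
  have "\<not> m w"
  proof
    assume "m w"
    moreover have "fix_var f x True (atom w)" using g_w[OF atom_in_cube[OF w(1)]] by (simp add: fix_var_def atom_def)
    ultimately have "atom w = m" using min_ones_g[OF m(1) mx] atom_in_cube[OF w(1)] by (auto simp: min_ones_iff)
    with mz zw show False by (auto simp: atom_def)
  qed
  then have "m \<le> atom z" using m(2) by (auto simp: pz_def atom_def le_fun_def)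
  then have "f (atom z)" using positiveD[OF p mc atom_in_cube[OF zn] _ fm] by blast
  with canalizing_var_of_atom[OF p zn _ b z(2)] show ?thesis by blast
qed

lemma canalizing_var_of_tight_fix_var_True:
  assumes p: "positive n f" and x: "relevant n f x"
    and rel: "relevant_vars n (fix_var f x True) = relevant_vars n f - {x}"
    and tight: "r n f = r n (fix_var f x True) + 1"
    and g: "relevant_vars n (fix_var f x True) = {} \<or> (\<exists>w. canalizing_var n (fix_var f x True) w)"
  shows "\<exists>w. canalizing_var n f w"
proof -
  have xn: "x < n" using relevant_less[OF x] .
  obtain b where b: "b \<in> max_zeros n f"
    and below_b: "\<And>a. a \<in> cube n \<Longrightarrow> \<not> a x \<Longrightarrow> \<not> f a \<Longrightarrow> f (a(x := True)) \<Longrightarrow> a \<le> b"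
    and min_ones_g: "\<And>m. m \<in> min_ones n f \<Longrightarrow> \<not> m x \<Longrightarrow> m \<in> min_ones n (fix_var f x True)"
    using extremal_points_tight_fix_var_True[OF p x tight] by blast
  consider (none) "relevant_vars n (fix_var f x True) = {}"
    | (can) w c where "relevant n (fix_var f x True) w" "canalizing n (fix_var f x True) w c"
    using g unfolding canalizing_var_def by blast
  then show ?thesis
  proof cases
    case none
    then have "relevant_vars n (fix_var f x False) = {}"
      using relevant_vars_fix_var[OF xn, of f False] rel by blast
    then show ?thesis using canalizing_False_if_fix_var_constant[OF p x] x by (auto simp: canalizing_var_def)
  next
    case (can w c)
    then have w: "relevant n f w" "w \<noteq> x" using rel by (metis Diff_iff in_relevant_vars_iff singletonI)+
    have wn: "w < n" using relevant_less[OF w(1)] .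
    show ?thesis
    proof (cases c)
      case False
      with canalizing_False_of_fix_var_True[OF p xn] can(2) w(1) show ?thesis
        by (auto simp: canalizing_var_def)
    next
      case True
      show ?thesis
      proof (cases "f (atom w) \<or> canalizing n f x False")
        case True
        then show ?thesis using canalizing_True_iff_atom[OF p wn] w(1) x
          by (auto simp: canalizing_var_def)
      next
        case False
        then obtain a0 where a0: "a0 \<in> cube n" "\<not> a0 x" "f a0" by (auto simp: canalizing_def)
        show ?thesis
        proof (rule canalizing_var_of_tight_atom[OF p xn wn w(2) b below_b min_ones_g _ _ a0])
          show "canalizing n (fix_var f x True) w True" using can(2) \<open>c\<close> by simp
          show "\<not> f (atom w)" using False by simp
        qed
      qed
    qed
  qed
qed

lemma canalizing_var_of_tight:
  assumes p: "positive n f" and x: "relevant n f x"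
    and rel: "relevant_vars n (fix_var f x c) = relevant_vars n f - {x}"
    and tight: "r n f = r n (fix_var f x c) + 1"
    and g: "relevant_vars n (fix_var f x c) = {} \<or> (\<exists>w. canalizing_var n (fix_var f x c) w)"
  shows "\<exists>w. canalizing_var n f w"
proof (cases c)
  case True
  with canalizing_var_of_tight_fix_var_True[OF p x] rel tight g show ?thesis by simp
next
  case False
  have "fix_var (dual n f) x True = dual n (fix_var f x c)"
    using fix_var_dual[OF relevant_less[OF x]] False by simp
  with canalizing_var_of_tight_fix_var_True[OF positive_dual[OF p], of x] x rel tight g
  show ?thesis by (simp add: relevant_dual relevant_vars_dual r_dual canalizing_var_dual)
qed

theorem canalizing_var_if_r_tight:
  assumes "positive n f" "r n f = card (relevant_vars n f) + 1"
  shows "relevant_vars n f = {} \<or> (\<exists>w. canalizing_var n f w)"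
  using assms
proof (induction "card (relevant_vars n f)" arbitrary: f)
  case 0
  then show ?case using finite_relevant_vars[of n f] by simp
next
  case (Suc k)
  have "relevant_vars n f \<noteq> {}" using Suc.hyps(2) by auto
  then obtain x c where x: "relevant n f x"
    and rel: "relevant_vars n (fix_var f x c) = relevant_vars n f - {x}"
    using fix_var_keeping_relevant_vars[OF Suc.prems(1)] by blast
  note tight = r_fix_var_tight[OF Suc.prems(1) x rel Suc.prems(2)]
  have k: "k = card (relevant_vars n (fix_var f x c))"
    using card_relevant_vars_remove[of x n f, OF _ rel] x Suc.hyps(2) by simp
  have "relevant_vars n (fix_var f x c) = {} \<or> (\<exists>w. canalizing_var n (fix_var f x c) w)"
    using Suc.hyps(1)[OF k positive_fix_var[OF Suc.prems(1) relevant_less[OF x]] tight(1)] .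
  then show ?case using canalizing_var_of_tight[OF Suc.prems(1) x rel tight(2)] by simp
qed

section \<open>Linear read-once functions\<close>

lemma min_ones_canalizing_True:
  assumes can: "canalizing n f v True" and v: "v < n"
  shows "min_ones n f \<subseteq> insert (atom v) (min_ones n (fix_var f v False))"
proof
  fix m assume m: "m \<in> min_ones n f"
  have mc: "m \<in> cube n" and fm: "f m" and mmin: "\<forall>y\<in>cube n. f y \<and> y \<le> m \<longrightarrow> y = m"
    using m by (auto simp: min_ones_iff)
  show "m \<in> insert (atom v) (min_ones n (fix_var f v False))"
  proof (cases "m v")
    case True
    have "f (atom v)" using can atom_in_cube[OF v] by (simp add: canalizing_def atom_def)
    with True mmin atom_in_cube[OF v] have "atom v = m" by simp
    then show ?thesis by simp
  next
    case False
    have "y = m" if y: "y \<in> cube n" "f (y(v := False))" "y \<le> m" for y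
    proof -
      have "y(v := False) \<in> cube n" "y(v := False) \<le> m" using y(1,3) v by (auto simp: le_fun_def)
      with y(2) mmin have "y(v := False) = m" by blast
      moreover have "y(v := False) = y" using y(3) False by (auto simp: le_fun_def fun_eq_iff)
      ultimately show ?thesis by simp
    qed
    moreover have "m(v := False) = m" using False by (simp add: fun_upd_idem)
    ultimately have "m \<in> min_ones n (fix_var f v False)"
      using mc fm unfolding min_ones_iff fix_var_def by simp
    then show ?thesis by simp
  qed
qed

lemma max_zeros_canalizing_True:
  assumes can: "canalizing n f v True" and v: "v < n"
  shows "max_zeros n f \<subseteq> (\<lambda>b. b(v := False)) ` max_zeros n (fix_var f v False)"
proof
  fix b assume b: "b \<in> max_zeros n f"
  have bc: "b \<in> cube n" and fb: "\<not> f b" and bmax: "\<forall>y\<in>cube n. \<not> f y \<and> b \<le> y \<longrightarrow> y = b"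
    using b by (auto simp: max_zeros_iff)
  have bv: "\<not> b v" using can bc fb unfolding canalizing_def by blast
  have "y = b(v := True)" if y: "y \<in> cube n" "\<not> f (y(v := False))" "b(v := True) \<le> y" for y
  proof -
    have "y(v := False) \<in> cube n" "b \<le> y(v := False)" using y(1,3) v bv by (auto simp: le_fun_def)
    with y(2) bmax have "y(v := False) = b" by blast
    moreover have "y = (y(v := False))(v := True)" using y(3) by (auto simp: le_fun_def fun_eq_iff)
    ultimately show ?thesis by simp
  qed
  moreover have "b(v := False) = b" using bv by (simp add: fun_upd_idem)
  ultimately have "b(v := True) \<in> max_zeros n (fix_var f v False)"
    using bc fb v unfolding max_zeros_iff fix_var_def by simp
  moreover have "b = (b(v := True))(v := False)" using bv by (simp add: fun_eq_iff)
  ultimately show "b \<in> (\<lambda>b. b(v := False)) ` max_zeros n (fix_var f v False)" by blast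
qed

lemma r_canalizing_le:
  assumes can: "canalizing n f v c" and v: "v < n"
  shows "r n f \<le> r n (fix_var f v (\<not> c)) + 1"
proof -
  have r_le: "r n f \<le> r n (fix_var f v False) + 1" if can: "canalizing n f v True" for f
  proof -
    have "card (min_ones n f) \<le> card (insert (atom v) (min_ones n (fix_var f v False)))"
      using card_mono[OF _ min_ones_canalizing_True[OF can v]] finite_min_ones by simp
    also have "\<dots> \<le> card (min_ones n (fix_var f v False)) + 1"
      by (simp add: card_insert_if finite_min_ones)
    finally have "card (min_ones n f) \<le> card (min_ones n (fix_var f v False)) + 1" .
    moreover have "card (max_zeros n f) \<le> card (max_zeros n (fix_var f v False))"
      using card_mono[OF _ max_zeros_canalizing_True[OF can v]] card_image_le[OF finite_max_zeros]
        finite_max_zeros le_trans by blast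
    ultimately show ?thesis by (simp add: r_eq_card)
  qed
  show ?thesis
  proof (cases c)
    case True
    with r_le can show ?thesis by simp
  next
    case False
    with can v have "canalizing n (dual n f) v True" by (simp add: canalizing_dual)
    from r_le[OF this] False v show ?thesis by (simp add: fix_var_dual r_dual)
  qed
qed

lemma r_le_if_canalizing:
  assumes can: "canalizing n f v c" and v: "relevant n f v"
    and g: "r n (fix_var f v (\<not> c)) \<le> card (relevant_vars n (fix_var f v (\<not> c))) + 1"
  shows "r n f \<le> card (relevant_vars n f) + 1"
proof -
  have vn: "v < n" using relevant_less[OF v] .
  have "card (relevant_vars n f) = card (relevant_vars n (fix_var f v (\<not> c))) + 1"
    using card_relevant_vars_remove[of v n f] relevant_vars_fix_var_canalizing[OF can vn] v by simp
  with r_canalizing_le[OF can vn] g show ?thesis by simp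
qed

lemma positive_canalizing_output:
  assumes p: "positive n f" and v: "relevant n f v" and can: "\<forall>a\<in>cube n. a v = d \<longrightarrow> f a = c"
  shows "c = d"
proof -
  obtain a where a: "a \<in> cube n" "\<not> f (a(v := False))" "f (a(v := True))"
    using positive_relevantE[OF p v] .
  with can relevant_less[OF v] show ?thesis by (cases d) auto
qed

lemma neval_fun_upd: "v \<notin> nvars \<phi> \<Longrightarrow> neval \<phi> (a(v := c)) = neval \<phi> a"
  by (induction \<phi>) auto

lemma neval_surj:
  assumes "nested_ok \<phi>" "nvars \<phi> \<subseteq> {..<n}"
  shows "\<exists>a\<in>cube n. neval \<phi> a = b"
  using assms
proof (induction \<phi>)
  case (NLit v p)
  then show ?case by (intro bexI[of _ "(\<lambda>_. False)(v := (p = b))"]) auto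
next
  case (NOr w p t)
  then have wt: "w \<notin> nvars t" and wn: "w < n" by auto
  from NOr obtain a where a: "a \<in> cube n" "neval t a = b" by auto
  have "neval (NOr w p t) (a(w := (p = b))) = b"
    using a(2) by (simp only: neval.simps neval_fun_upd[OF wt]) simp
  moreover have "a(w := (p = b)) \<in> cube n" using a(1) wn by simp
  ultimately show ?case by blast
next
  case (NAnd w p t)
  then have wt: "w \<notin> nvars t" and wn: "w < n" by auto
  from NAnd obtain a where a: "a \<in> cube n" "neval t a = b" by auto
  have "neval (NAnd w p t) (a(w := (p = b))) = b"
    using a(2) by (simp only: neval.simps neval_fun_upd[OF wt]) simp
  moreover have "a(w := (p = b)) \<in> cube n" using a(1) wn by simp
  ultimately show ?case by blast
qed

lemma relevant_neval:
  assumes "nested_ok \<phi>" "nvars \<phi> \<subseteq> {..<n}" "v \<in> nvars \<phi>"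
  shows "relevant n (neval \<phi>) v"
  using assms
proof (induction \<phi>)
  case (NLit w p)
  then show ?case by (intro relevantI[OF bot_in_cube]) auto
next
  case (NOr w p t)
  then have wt: "w \<notin> nvars t" and wn: "w < n" by auto
  then have t_upd: "neval t (a(w := c)) = neval t a" for a c by (simp add: neval_fun_upd)
  show ?case
  proof (cases "v = w")
    case True
    obtain a where "a \<in> cube n" "\<not> neval t a" using neval_surj[of t n False] NOr.prems by auto
    then have "neval (NOr w p t) (a(w := False)) \<noteq> neval (NOr w p t) (a(w := True))"
      by (simp only: neval.simps t_upd) simp
    with \<open>a \<in> cube n\<close> wn have "relevant n (neval (NOr w p t)) w" by (rule relevantI)
    then show ?thesis by (simp only: True)
  next
    case False
    with NOr obtain a where a: "a \<in> cube n" "neval t (a(v := False)) \<noteq> neval t (a(v := True))"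
      and vn: "v < n" by (auto simp: relevant_def)
    have "a(w := \<not> p) \<in> cube n" using a(1) wn by simp
    moreover have "neval (NOr w p t) (a(w := \<not> p, v := False)) \<noteq> neval (NOr w p t) (a(w := \<not> p, v := True))"
      using a(2) False by (simp only: neval.simps fun_upd_twist[of w v] t_upd) simp
    ultimately show ?thesis using vn by (intro relevantI)
  qed
next
  case (NAnd w p t)
  then have wt: "w \<notin> nvars t" and wn: "w < n" by auto
  then have t_upd: "neval t (a(w := c)) = neval t a" for a c by (simp add: neval_fun_upd)
  show ?case
  proof (cases "v = w")
    case True
    obtain a where "a \<in> cube n" "neval t a" using neval_surj[of t n True] NAnd.prems by auto
    then have "neval (NAnd w p t) (a(w := False)) \<noteq> neval (NAnd w p t) (a(w := True))"
      by (simp only: neval.simps t_upd) simp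
    with \<open>a \<in> cube n\<close> wn have "relevant n (neval (NAnd w p t)) w" by (rule relevantI)
    then show ?thesis by (simp only: True)
  next
    case False
    with NAnd obtain a where a: "a \<in> cube n" "neval t (a(v := False)) \<noteq> neval t (a(v := True))"
      and vn: "v < n" by (auto simp: relevant_def)
    have "a(w := p) \<in> cube n" using a(1) wn by simp
    moreover have "neval (NAnd w p t) (a(w := p, v := False)) \<noteq> neval (NAnd w p t) (a(w := p, v := True))"
      using a(2) False by (simp only: neval.simps fun_upd_twist[of w v] t_upd) simp
    ultimately show ?thesis using vn by (intro relevantI)
  qed
qed

lemma relevant_cong:
  assumes "\<forall>a\<in>cube n. f a = g a"
  shows "relevant n f v \<longleftrightarrow> relevant n g v"
  using assms by (auto simp: relevant_def)

lemma relevant_if_nested: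
  assumes "nested_ok \<phi>" "nvars \<phi> \<subseteq> {..<n}" "\<forall>a\<in>cube n. f a = neval \<phi> a" "v \<in> nvars \<phi>"
  shows "relevant n f v"
  using relevant_neval[OF assms(1,2,4)] relevant_cong[OF assms(3)] by blast

lemma r_le_if_nested:
  assumes "nested_ok \<phi>" "nvars \<phi> \<subseteq> {..<n}" "positive n f" "\<forall>a\<in>cube n. f a = neval \<phi> a"
  shows "r n f \<le> card (relevant_vars n f) + 1"
  using assms
proof (induction \<phi> arbitrary: f)
  case (NLit v p)
  have v: "relevant n f v" using relevant_if_nested[OF NLit.prems(1,2,4)] by simp
  have "\<forall>a\<in>cube n. a v = p \<longrightarrow> f a = True" using NLit.prems(4) by auto
  then have p and can: "canalizing n f v True"
    using positive_canalizing_output[OF NLit.prems(3) v] by (auto simp: canalizing_def)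
  have "\<forall>a\<in>cube n. fix_var f v False a = False"
    using NLit.prems(4) relevant_less[OF v] \<open>p\<close> by (simp add: fix_var_def)
  then have "r n (fix_var f v False) \<le> 1" by (rule r_le_one_if_constant)
  with r_le_if_canalizing[OF can v] show ?case by simp
next
  case (NOr v p t)
  have v: "relevant n f v" using relevant_if_nested[OF NOr.prems(1,2,4)] by simp
  have vt: "v \<notin> nvars t" and vn: "v < n" using NOr.prems(1,2) by auto
  have "\<forall>a\<in>cube n. a v = p \<longrightarrow> f a = True" using NOr.prems(4) by auto
  then have p and can: "canalizing n f v True"
    using positive_canalizing_output[OF NOr.prems(3) v] by (auto simp: canalizing_def)
  have "\<forall>a\<in>cube n. fix_var f v False a = neval t a"
    using NOr.prems(4) vn \<open>p\<close> by (simp add: fix_var_def neval_fun_upd[OF vt])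
  with NOr.IH NOr.prems(1,2) positive_fix_var[OF NOr.prems(3) vn]
  have "r n (fix_var f v False) \<le> card (relevant_vars n (fix_var f v False)) + 1" by simp
  with r_le_if_canalizing[OF can v] show ?case by simp
next
  case (NAnd v p t)
  have v: "relevant n f v" using relevant_if_nested[OF NAnd.prems(1,2,4)] by simp
  have vt: "v \<notin> nvars t" and vn: "v < n" using NAnd.prems(1,2) by auto
  have "\<forall>a\<in>cube n. a v = (\<not> p) \<longrightarrow> f a = False" using NAnd.prems(4) by auto
  then have p and can: "canalizing n f v False"
    using positive_canalizing_output[OF NAnd.prems(3) v] by (auto simp: canalizing_def)
  have "\<forall>a\<in>cube n. fix_var f v True a = neval t a"
    using NAnd.prems(4) vn \<open>p\<close> by (simp add: fix_var_def neval_fun_upd[OF vt])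
  with NAnd.IH NAnd.prems(1,2) positive_fix_var[OF NAnd.prems(3) vn]
  have "r n (fix_var f v True) \<le> card (relevant_vars n (fix_var f v True)) + 1" by simp
  with r_le_if_canalizing[OF can v] show ?case by simp
qed

lemma r_le_if_lro:
  assumes "positive n f" "lro n f"
  shows "r n f \<le> card (relevant_vars n f) + 1"
proof -
  from assms(2) consider (const) c where "\<forall>a\<in>cube n. f a = c"
    | (nested) \<phi> where "nested_ok \<phi>" "nvars \<phi> \<subseteq> {..<n}" "\<forall>a\<in>cube n. f a = neval \<phi> a"
    unfolding lro_def by blast
  then show ?thesis
  proof cases
    case const
    then have "r n f \<le> 1" by (rule r_le_one_if_constant)
    then show ?thesis by simp
  next
    case nested
    then show ?thesis by (rule r_le_if_nested[OF _ _ assms(1)])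
  qed
qed

lemma lro_if_canalizing:
  assumes can: "canalizing n f w c" and w: "w < n" and g: "lro n (fix_var f w (\<not> c))"
  shows "lro n f"
proof -
  let ?g = "fix_var f w (\<not> c)"
  have f_eq: "f a = (if c then a w \<or> ?g a else a w \<and> ?g a)" if a: "a \<in> cube n" for a
  proof (cases "a w = c")
    case True
    with can a show ?thesis by (auto simp: canalizing_def)
  next
    case False
    then have "a(w := \<not> c) = a" by (auto simp: fun_eq_iff)
    with False show ?thesis by (auto simp: fix_var_def)
  qed
  from g consider (const) d where "\<forall>a\<in>cube n. ?g a = d"
    | (nested) \<phi> where "nested_ok \<phi>" "nvars \<phi> \<subseteq> {..<n}" "\<forall>a\<in>cube n. ?g a = neval \<phi> a"
    unfolding lro_def by blast
  then show ?thesis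
  proof cases
    case (const d)
    show ?thesis
    proof (cases "d = c")
      case True
      then have "\<forall>a\<in>cube n. f a = c" using f_eq const by auto
      then show ?thesis by (auto simp: lro_def)
    next
      case False
      then have "\<forall>a\<in>cube n. f a = neval (NLit w True) a" using f_eq const by auto
      with w show ?thesis unfolding lro_def by (intro disjI2 exI[of _ "NLit w True"]) simp
    qed
  next
    case (nested \<phi>)
    have "w \<notin> nvars \<phi>"
    proof
      assume "w \<in> nvars \<phi>"
      then have "relevant n ?g w" by (rule relevant_if_nested[OF nested])
      then show False using relevant_vars_fix_var[OF w, of f "\<not> c"] by auto
    qed
    let ?\<psi> = "if c then NOr w True \<phi> else NAnd w True \<phi>"
    have "\<forall>a\<in>cube n. f a = neval ?\<psi> a" using f_eq nested(3) by auto
    moreover have "nested_ok ?\<psi>" "nvars ?\<psi> \<subseteq> {..<n}" using \<open>w \<notin> nvars \<phi>\<close> nested w by auto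
    ultimately show ?thesis unfolding lro_def by blast
  qed
qed


theorem lro_if_r_tight:
  assumes "positive n f" "r n f = card (relevant_vars n f) + 1"
  shows "lro n f"
  using assms
proof (induction "card (relevant_vars n f)" arbitrary: f)
  case 0
  then have "relevant_vars n f = {}" using finite_relevant_vars[of n f] by simp
  then have "\<forall>a\<in>cube n. f a = f (\<lambda>_. False)" using constant_if_no_relevant by blast
  then show ?case unfolding lro_def by blast
next
  case (Suc k)
  have "relevant_vars n f \<noteq> {}" using Suc.hyps(2) by auto
  with canalizing_var_if_r_tight[OF Suc.prems] obtain w where "canalizing_var n f w" by blast
  then obtain c where w: "relevant n f w" and can: "canalizing n f w c"
    by (auto simp: canalizing_var_def)
  have wn: "w < n" using relevant_less[OF w] .
  note rel = relevant_vars_fix_var_canalizing[OF can wn]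
  have k: "k = card (relevant_vars n (fix_var f w (\<not> c)))"
    using card_relevant_vars_remove[of w n f, OF _ rel] w Suc.hyps(2) by simp
  have "lro n (fix_var f w (\<not> c))"
    using Suc.hyps(1)[OF k positive_fix_var[OF Suc.prems(1) wn]
        r_fix_var_tight(1)[OF Suc.prems(1) w rel Suc.prems(2)]] .
  then show ?case by (rule lro_if_canalizing[OF can wn])
qed

theorem mainTheorem1:
  fixes n k :: nat and f :: "(nat \<Rightarrow> bool) \<Rightarrow> bool"
  assumes "positive n f"
    and "card (relevant_vars n f) = k"
  shows "r n f \<ge> k + 1 \<and> (r n f = k + 1 \<longleftrightarrow> lro n f)"
proof -
  have "k + 1 \<le> r n f" using r_lower_bound[OF assms(1)] assms(2) by simp
  moreover have "lro n f \<Longrightarrow> r n f \<le> k + 1" using r_le_if_lro[OF assms(1)] assms(2) by simp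
  moreover have "r n f = k + 1 \<Longrightarrow> lro n f" using lro_if_r_tight[OF assms(1)] assms(2) by simp
  ultimately show ?thesis by linarith
qed

end
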